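(* In the setting of arc-length coordinates $(x,x')$ on the exterior of the oval $\gamma$, consider the $2$-form $$\omega=-\frac{\partial^2 H(x,x')}{\partial x\,\partial x'}\,dx\wedge dx',$$ where $H(x,x')=|\gamma(x)A|+|A\gamma(x')|$. Let $\omega_0$ be the standard Euclidean area form of the plane, expressed in the coordinates $(x,x')$ and oriented so that $\omega_0=c\,dx\wedge dx'$ with $c>0$. Then at the point $A$ corresponding to $(x,x')$, $$\omega=\cot\Big(\frac{\varphi}{2}\Big)\left(\frac{1}{|A\gamma(x)|}+\frac{1}{|A\gamma(x')|}\right)\omega_0,$$ where $\varphi\in(0,\pi)$ is the angle at $A$ between the segments $A\gamma(x)$ and $A\gamma(x')$.
   Context: An oval is a smooth closed simple planar curve $\gamma$ with everywhere positive curvature; it bounds a compact strictly convex domain $K$. Orient $\gamma$ counterclockwise and let $s\mapsto\gamma(s)$ be an arc length parameterization increasing along this orientation. For a point $A\in\mathbb{R}^2\setminus K$ there are exactly two lines through $A$ tangent to $\gamma$. The positive tangency point $x_+(A)$ is the one for which $x_+(A)-A$ is a positive multiple of the oriented tangent vector of $\gamma$ at $x_+(A)$. The negative tangency point $x_-(A)$ is the one for which $A-x_-(A)$ is a positive multiple of the oriented tangent vector of $\gamma$ at $x_-(A)$. Each exterior point $A$ is identified with the pair of arc-length parameters $(x,x')$ given by $\gamma(x)=x_-(A)$ and $\gamma(x')=x_+(A)$. This identification gives coordinates $(x,x')$ on the exterior of $\gamma$. *)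

theory Defs
  imports "HOL-Analysis.Analysis"
begin

definition smooth_real_fun :: "(real \<Rightarrow> real) \<Rightarrow> bool" where
  "smooth_real_fun f \<longleftrightarrow> (\<forall>n t. ((deriv ^^ n) f) differentiable (at t))"

definition cx :: "(real \<Rightarrow> complex) \<Rightarrow> real \<Rightarrow> real" where
  "cx \<gamma> = (\<lambda>t. Re (\<gamma> t))"

definition cy :: "(real \<Rightarrow> complex) \<Rightarrow> real \<Rightarrow> real" where
  "cy \<gamma> = (\<lambda>t. Im (\<gamma> t))"

definition tangent :: "(real \<Rightarrow> complex) \<Rightarrow> real \<Rightarrow> complex" where
  "tangent \<gamma> s = Complex (deriv (cx \<gamma>) s) (deriv (cy \<gamma>) s)"

text \<open>Signed curvature (for a unit speed curve).\<close>
definition signed_curvature :: "(real \<Rightarrow> complex) \<Rightarrow> real \<Rightarrow> real" where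
  "signed_curvature \<gamma> s =
     deriv (cx \<gamma>) s * deriv (deriv (cy \<gamma>)) s - deriv (cy \<gamma>) s * deriv (deriv (cx \<gamma>)) s"

definition arclength_oval :: "(real \<Rightarrow> complex) \<Rightarrow> real \<Rightarrow> bool" where
  "arclength_oval \<gamma> L \<longleftrightarrow>
     L > 0 \<and>
     smooth_real_fun (cx \<gamma>) \<and> smooth_real_fun (cy \<gamma>) \<and>
     (\<forall>t. \<gamma> (t + L) = \<gamma> t) \<and>
     inj_on \<gamma> {0..<L} \<and>
     (\<forall>s. norm (tangent \<gamma> s) = 1) \<and>
     (\<forall>s. signed_curvature \<gamma> s > 0)"

definition oval_domain :: "(real \<Rightarrow> complex) \<Rightarrow> complex set" where
  "oval_domain \<gamma> = range \<gamma> \<union> inside (range \<gamma>)"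

definition pos_tangency :: "(real \<Rightarrow> complex) \<Rightarrow> complex \<Rightarrow> real \<Rightarrow> bool" where
  "pos_tangency \<gamma> A s \<longleftrightarrow> (\<exists>c>0. \<gamma> s - A = of_real c * tangent \<gamma> s)"

definition neg_tangency :: "(real \<Rightarrow> complex) \<Rightarrow> complex \<Rightarrow> real \<Rightarrow> bool" where
  "neg_tangency \<gamma> A s \<longleftrightarrow> (\<exists>c>0. A - \<gamma> s = of_real c * tangent \<gamma> s)"

definition coord_point :: "(real \<Rightarrow> complex) \<Rightarrow> real \<Rightarrow> real \<Rightarrow> complex" where
  "coord_point \<gamma> u u' =
     (THE B. B \<notin> oval_domain \<gamma> \<and> neg_tangency \<gamma> B u \<and> pos_tangency \<gamma> B u')"

definition Hfun :: "(real \<Rightarrow> complex) \<Rightarrow> real \<Rightarrow> real \<Rightarrow> real" where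
  "Hfun \<gamma> u u' = dist (\<gamma> u) (coord_point \<gamma> u u') + dist (coord_point \<gamma> u u') (\<gamma> u')"

text \<open>Jacobian determinant of (u,u') |-> A(u,u') at (x,x');
  the Euclidean area form is this times du /\ du'.\<close>
definition coord_jacobian :: "(real \<Rightarrow> complex) \<Rightarrow> real \<Rightarrow> real \<Rightarrow> real" where
  "coord_jacobian \<gamma> x x' =
     deriv (\<lambda>u. Re (coord_point \<gamma> u x')) x * deriv (\<lambda>v. Im (coord_point \<gamma> x v)) x'
   - deriv (\<lambda>v. Re (coord_point \<gamma> x v)) x' * deriv (\<lambda>u. Im (coord_point \<gamma> u x')) x"

definition vec_angle :: "complex \<Rightarrow> complex \<Rightarrow> real" where
  "vec_angle u v = arccos ((u \<bullet> v) / (norm u * norm v))"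

end

theory Submission
  imports Defs
begin

text \<open>Near \<open>(x, x')\<close> the point \<open>A(u, v)\<close> is where the tangent lines at \<open>\<gamma> u\<close> and \<open>\<gamma> v\<close> meet:
  \<open>A = \<gamma> u + a T u = \<gamma> v - b T v\<close> with \<open>a = |\<gamma>(u) A|\<close>, \<open>b = |A \<gamma>(v)|\<close>, so \<open>H = a + b\<close>.
  Let \<open>s\<close> and \<open>c\<close> be the sine and cosine of the angle from \<open>T u\<close> to \<open>T v\<close>. Using the Frenet
  equations one finds \<open>\<partial>\<^sub>v H = 1 + k(v) b s / (1 + c)\<close>, \<open>\<partial>\<^sub>u \<partial>\<^sub>v H = - k(u) k(v) (a + b) / (1 + c)\<close>, and
  that the Jacobian of \<open>(u, v) \<mapsto> A\<close> is \<open>- k(u) k(v) a b / s\<close>. Since \<open>cos \<phi> = - c\<close> we have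
  \<open>cot (\<phi> / 2) = (1 - c) / |s|\<close>, and the formula follows from \<open>s\<^sup>2 = (1 - c) (1 + c)\<close>.

  The global input is \<open>s \<noteq> 0\<close> at \<open>(x, x')\<close>: the oval lies strictly to the left of each of its
  tangent lines. This holds because the tangent angle increases by exactly \<open>2 \<pi>\<close> over a period,
  which is proved with Hopf's secant map on the triangle \<open>0 \<le> s \<le> t \<le> L\<close>.\<close>

lemma smooth_real_fun_DERIV:
  "smooth_real_fun f \<Longrightarrow> (f has_real_derivative deriv f t) (at t)"
  unfolding smooth_real_fun_def
  by (metis DERIV_deriv_iff_real_differentiable funpow_0)

lemma smooth_real_fun_DERIV_deriv:
  "smooth_real_fun f \<Longrightarrow> (deriv f has_real_derivative deriv (deriv f) t) (at t)"
  unfolding smooth_real_fun_def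
  by (metis DERIV_deriv_iff_real_differentiable funpow_0 funpow_Suc_right comp_def One_nat_def)

lemma periodic_shift_int:
  fixes f :: "real \<Rightarrow> 'a" and L t :: real
  assumes "\<And>t. f (t + L) = f t"
  shows "f (t + of_int n * L) = f t"
proof -
  have nat: "f (t + real m * L) = f t" for t m
  proof (induction m arbitrary: t)
    case (Suc m)
    have "f (t + real (Suc m) * L) = f ((t + real m * L) + L)"
      by (simp add: algebra_simps)
    also have "\<dots> = f t"
      using assms[of "t + real m * L"] Suc by simp
    finally show ?case .
  qed simp
  show ?thesis
  proof (cases "n \<ge> 0")
    case True
    then show ?thesis using nat[of t "nat n"] by simp
  next
    case False
    then show ?thesis using nat[of "t + of_int n * L" "nat (-n)"] by simp
  qed
qed

lemma exists_shift_into_period: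
  fixes L t :: real
  assumes "L > 0"
  obtains n :: int where "t - of_int n * L \<in> {0..<L}"
proof
  show "t - of_int \<lfloor>t / L\<rfloor> * L \<in> {0..<L}"
    using floor_divide_lower[OF assms] floor_divide_upper[OF assms] by (auto simp: algebra_simps)
qed

lemma norm_sgn_sub_le:
  fixes w u :: "'a :: real_normed_vector" and r e :: real
  assumes "norm u = 1" "r \<noteq> 0" "norm (w - r *\<^sub>R u) \<le> e * \<bar>r\<bar>" "e < 1"
  shows "norm (sgn w - sgn r *\<^sub>R u) \<le> 2 * e"
proof -
  define w' where "w' = w /\<^sub>R \<bar>r\<bar>"
  have "w' - sgn r *\<^sub>R u = (w - r *\<^sub>R u) /\<^sub>R \<bar>r\<bar>"
    unfolding w'_def using assms(2) by (simp add: algebra_simps sgn_real_def scaleR_diff_right)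
  then have "norm (w' - sgn r *\<^sub>R u) = norm (w - r *\<^sub>R u) / \<bar>r\<bar>"
    by (simp add: divide_inverse_commute)
  also have "\<dots> \<le> e"
    using assms(2,3) by (simp add: pos_divide_le_eq)
  finally have close: "norm (w' - sgn r *\<^sub>R u) \<le> e" .
  have "norm (sgn r *\<^sub>R u) = 1" using assms(1,2) by (simp add: abs_sgn)
  then have norm_w': "\<bar>norm w' - 1\<bar> \<le> e"
    using norm_triangle_ineq3[of w' "sgn r *\<^sub>R u"] close by simp
  then have "w' \<noteq> 0" using assms(4) by auto
  have "sgn w = sgn w'"
    unfolding w'_def using assms(2) by (simp add: sgn_scaleR)
  also have "norm (sgn w' - w') = \<bar>norm w' - 1\<bar>"
  proof -
    have "sgn w' - w' = (1 / norm w' - 1) *\<^sub>R w'"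
      by (simp add: sgn_div_norm algebra_simps divide_inverse)
    moreover have "\<bar>1 / norm w' - 1\<bar> * norm w' = \<bar>(1 / norm w' - 1) * norm w'\<bar>"
      by (simp add: abs_mult)
    moreover have "(1 / norm w' - 1) * norm w' = - (norm w' - 1)"
      using \<open>w' \<noteq> 0\<close> by (simp add: field_simps)
    ultimately show ?thesis by simp
  qed
  then have "norm (sgn w' - sgn r *\<^sub>R u) \<le> \<bar>norm w' - 1\<bar> + norm (w' - sgn r *\<^sub>R u)"
    using norm_triangle_ineq[of "sgn w' - w'" "w' - sgn r *\<^sub>R u"] by simp
  finally show ?thesis using close norm_w' by simp
qed

lemma cot_half_arccos:
  assumes "-1 < C" "C < 1"
  shows "cot (arccos (- C) / 2) = (1 - C) / sqrt (1 - C\<^sup>2)"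
proof -
  define \<phi> where "\<phi> = arccos (- C)"
  have "0 < \<phi>" "\<phi> < pi" unfolding \<phi>_def using arccos_lt_bounded[of "-C"] assms by auto
  then have "cos (\<phi> / 2) > 0" "sin (\<phi> / 2) > 0"
    by (auto intro: cos_gt_zero_pi sin_gt_zero)
  moreover have "sin \<phi> = 2 * sin (\<phi> / 2) * cos (\<phi> / 2)" "1 + cos \<phi> = 2 * (cos (\<phi> / 2))\<^sup>2"
    using sin_double[of "\<phi> / 2"] cos_double_cos[of "\<phi> / 2"] by simp_all
  ultimately have "cot (\<phi> / 2) = (1 + cos \<phi>) / sin \<phi>"
    by (simp add: cot_def power2_eq_square field_simps)
  moreover have "cos \<phi> = - C" "sin \<phi> = sqrt (1 - C\<^sup>2)"
    unfolding \<phi>_def using assms sin_arccos[of "-C"] by simp_all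
  ultimately show ?thesis unfolding \<phi>_def by simp
qed

lemma eventually_nhds_isCont_open:
  "isCont f z \<Longrightarrow> open S \<Longrightarrow> f z \<in> S \<Longrightarrow> eventually (\<lambda>y. f y \<in> S) (nhds z)"
  unfolding isCont_def eventually_nhds_conv_at by (auto dest: topological_tendstoD)

section \<open>Continuous arguments of circle-valued maps\<close>

lemma cis_eq_cis_imp_int:
  assumes "cis a = cis b"
  obtains n :: int where "a = b + 2 * pi * of_int n"
  using assms sin_cos_eq_iff[of a b] by (auto simp: complex_eq_iff)

lemma cis_lifts_diff_constant:
  fixes f g :: "real \<Rightarrow> real"
  assumes "continuous_on {a..b} f" "continuous_on {a..b} g" "a \<le> b"
    and "\<And>t. t \<in> {a..b} \<Longrightarrow> cis (f t) = cis (g t)"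
  shows "f b - g b = f a - g a"
proof -
  have "(\<lambda>t. f t - g t) constant_on {a..b}"
  proof (rule continuous_discrete_range_constant)
    show "continuous_on {a..b} (\<lambda>t. f t - g t)"
      using assms by (intro continuous_intros)
    fix t assume t: "t \<in> {a..b}"
    obtain n :: int where "f t = g t + 2 * pi * of_int n"
      using cis_eq_cis_imp_int[OF assms(4)[OF t]] by blast
    then have n: "f t - g t = 2 * pi * of_int n" by simp
    show "\<exists>e>0. \<forall>s. s \<in> {a..b} \<and> f s - g s \<noteq> f t - g t \<longrightarrow> e \<le> norm (f s - g s - (f t - g t))"
    proof (intro exI[of _ "2 * pi"] conjI allI impI)
      fix s assume s: "s \<in> {a..b} \<and> f s - g s \<noteq> f t - g t"
      obtain m :: int where "f s = g s + 2 * pi * of_int m"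
        using cis_eq_cis_imp_int[OF assms(4)] s by blast
      then have m: "f s - g s = 2 * pi * of_int m" by simp
      have "m \<noteq> n" using s n m by auto
      then have "1 \<le> \<bar>m - n\<bar>" by linarith
      then have "1 \<le> \<bar>of_int m - of_int n :: real\<bar>"
        by (metis of_int_1_le_iff of_int_abs of_int_diff)
      then have "2 * pi * 1 \<le> 2 * pi * \<bar>of_int m - of_int n :: real\<bar>"
        by (intro mult_left_mono) auto
      then show "2 * pi \<le> norm (f s - g s - (f t - g t))"
        by (simp add: n m abs_mult flip: right_diff_distrib)
    qed simp
  qed simp
  then show ?thesis
    using assms(3) unfolding constant_on_def by force
qed

lemma cis_lift_half_turn_pos:
  fixes \<psi> :: "real \<Rightarrow> real"
  assumes cont: "continuous_on {0..L} \<psi>" and "0 \<le> L" and "\<psi> 0 = 0" and "cis (\<psi> L) = -1"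
    and sin_nonneg: "\<And>t. t \<in> {0..L} \<Longrightarrow> sin (\<psi> t) \<ge> 0"
  shows "\<psi> L = pi"
proof -
  have "convex (\<psi> ` {0..L})"
    using connected_continuous_image[OF cont]
    by (simp add: is_interval_convex_1[symmetric] is_interval_connected_1)
  moreover have "0 \<in> \<psi> ` {0..L}" "\<psi> L \<in> \<psi> ` {0..L}"
    using \<open>0 \<le> L\<close> \<open>\<psi> 0 = 0\<close> by (auto intro: image_eqI[of 0])
  ultimately have segment: "closed_segment 0 (\<psi> L) \<subseteq> \<psi> ` {0..L}"
    by (rule closed_segment_subset[rotated -1])
  have no_value: "sin y \<ge> 0" if "y \<in> closed_segment 0 (\<psi> L)" for y
    using segment that sin_nonneg by blast
  obtain m :: int where m: "\<psi> L = pi + 2 * pi * of_int m"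
    using cis_eq_cis_imp_int[of "\<psi> L" pi] \<open>cis (\<psi> L) = -1\<close> by auto
  consider "m \<ge> 1" | "m \<le> -1" | "m = 0" by linarith
  then show ?thesis
  proof cases
    case 1
    then have "2 * pi * 1 \<le> 2 * pi * of_int m"
      by (intro mult_left_mono) auto
    then have "3 * pi / 2 \<le> \<psi> L" "0 \<le> \<psi> L" using m pi_gt_zero by linarith+
    then have "3 * pi / 2 \<in> closed_segment 0 (\<psi> L)"
      by (simp add: closed_segment_eq_real_ivl)
    moreover have "sin (3 * pi / 2) < 0"
      using sin_periodic_pi[of "pi / 2"] by (simp add: add_divide_distrib)
    ultimately show ?thesis using no_value by (meson not_le)
  next
    case 2
    then have "2 * pi * of_int m \<le> 2 * pi * (-1)"
      by (intro mult_left_mono) auto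
    then have "\<psi> L \<le> - pi / 2" "\<psi> L < 0" using m pi_gt_zero by linarith+
    then have "- pi / 2 \<in> closed_segment 0 (\<psi> L)"
      by (simp add: closed_segment_eq_real_ivl)
    moreover have "sin (- pi / 2) < 0" by simp
    ultimately show ?thesis using no_value by (meson not_le)
  qed (use m in simp)
qed

lemma cis_lift_half_turn:
  fixes \<psi> :: "real \<Rightarrow> real"
  assumes "continuous_on {0..L} \<psi>" "0 \<le> L" "\<psi> 0 = 0" "cis (\<psi> L) = -1"
    and "\<sigma> = 1 \<or> \<sigma> = -1" and "\<And>t. t \<in> {0..L} \<Longrightarrow> \<sigma> * sin (\<psi> t) \<ge> 0"
  shows "\<psi> L = \<sigma> * pi"
  using assms(5)
proof
  assume "\<sigma> = 1"
  then show ?thesis using cis_lift_half_turn_pos[of L \<psi>] assms by simp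
next
  assume \<sigma>: "\<sigma> = -1"
  have "- \<psi> L = pi"
    using assms \<sigma> by (intro cis_lift_half_turn_pos[of L "\<lambda>t. - \<psi> t"])
      (auto intro: continuous_intros simp flip: cis_inverse)
  then show ?thesis using \<sigma> by simp
qed

lemma DERIV_cis_lift:
  fixes \<theta> :: "real \<Rightarrow> real" and f :: "real \<Rightarrow> complex"
  assumes cont: "continuous_on UNIV \<theta>" and lift: "\<And>t. f t = cis (\<theta> t)"
    and deriv: "(f has_vector_derivative \<i> * of_real \<kappa> * f t0) (at t0)"
  shows "(\<theta> has_real_derivative \<kappa>) (at t0)"
proof -
  define U where "U = {t. \<bar>\<theta> t - \<theta> t0\<bar> < pi}"
  have "open U" "t0 \<in> U"
    unfolding U_def using cont
    by (auto intro!: open_Collect_less continuous_intros simp: continuous_on_eq_continuous_at)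
  define c where "c = cnj (f t0)"
  have one: "f t0 * c = 1"
    unfolding c_def lift by (simp add: cis_cnj cis_mult)
  \<comment> \<open>Near t0 the lift is recovered from f by the principal logarithm.\<close>
  have local_lift: "\<theta> t0 + Im (Ln (f t * c)) = \<theta> t" if "t \<in> U" for t
  proof -
    have "f t * c = cis (\<theta> t - \<theta> t0)"
      unfolding c_def lift by (simp add: cis_cnj cis_mult)
    then have "f t * c = exp (\<i> * of_real (\<theta> t - \<theta> t0))"
      by (simp add: cis_conv_exp)
    moreover have "Ln (exp (\<i> * of_real (\<theta> t - \<theta> t0))) = \<i> * of_real (\<theta> t - \<theta> t0)"
      using that by (intro Ln_exp) (auto simp: U_def)
    ultimately show ?thesis by simp
  qed
  have "((\<lambda>t. f t * c) has_vector_derivative \<i> * of_real \<kappa> * f t0 * c) (at t0)"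
    using deriv by (rule has_vector_derivative_mult_left)
  moreover have "(Ln has_field_derivative inverse (f t0 * c)) (at (f t0 * c))"
    using one by (intro has_field_derivative_Ln) auto
  ultimately have "((Ln \<circ> (\<lambda>t. f t * c)) has_vector_derivative
      \<i> * of_real \<kappa> * f t0 * c * inverse (f t0 * c)) (at t0)"
    by (rule field_vector_diff_chain_at)
  then have "((\<lambda>t. Ln (f t * c)) has_vector_derivative \<i> * of_real \<kappa>) (at t0)"
    using one by (simp add: comp_def mult.assoc)
  then have "((\<lambda>t. Im (Ln (f t * c))) has_real_derivative \<kappa>) (at t0)"
    unfolding has_vector_derivative_complex_iff by simp
  then have "((\<lambda>t. \<theta> t0 + Im (Ln (f t * c))) has_real_derivative \<kappa>) (at t0)"
    using DERIV_add[OF DERIV_const[of "\<theta> t0"]] by fastforce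
  then show ?thesis
    using has_field_derivative_transform_within_open[OF _ \<open>open U\<close> \<open>t0 \<in> U\<close>] local_lift by blast
qed

section \<open>The oval and its Frenet frame\<close>

locale oval =
  fixes \<gamma> :: "real \<Rightarrow> complex" and L :: real
  assumes arclength_oval: "arclength_oval \<gamma> L"
begin

definition "X = cx \<gamma>"
definition "Y = cy \<gamma>"
definition "P = deriv X"
definition "Q = deriv Y"
definition "P2 = deriv P"
definition "Q2 = deriv Q"
definition "k t = P t * Q2 t - Q t * P2 t"
definition "T t = Complex (P t) (Q t)"

lemma L_pos: "L > 0"
  using arclength_oval unfolding arclength_oval_def by auto

lemma periodic: "\<gamma> (t + L) = \<gamma> t"
  using arclength_oval unfolding arclength_oval_def by auto

lemma inj_on_period: "inj_on \<gamma> {0..<L}"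
  using arclength_oval unfolding arclength_oval_def by auto

lemma tangent_eq_T: "tangent \<gamma> s = T s"
  unfolding tangent_def T_def P_def Q_def X_def Y_def by simp

lemma k_pos: "k s > 0"
  using arclength_oval
  unfolding arclength_oval_def signed_curvature_def k_def P2_def Q2_def P_def Q_def X_def Y_def
  by auto

lemma norm_T: "norm (T s) = 1"
  using arclength_oval unfolding arclength_oval_def tangent_eq_T by auto

lemma T_nonzero: "T s \<noteq> 0"
  using norm_T[of s] by auto

lemma P_Q_unit: "P s ^ 2 + Q s ^ 2 = 1"
  using norm_T[of s] unfolding T_def cmod_def by simp

lemma gamma_eq: "\<gamma> t = Complex (X t) (Y t)"
  unfolding X_def Y_def cx_def cy_def by simp

lemma DERIV_X: "(X has_real_derivative P t) (at t)"
  using arclength_oval smooth_real_fun_DERIV unfolding arclength_oval_def X_def P_def by blast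

lemma DERIV_Y: "(Y has_real_derivative Q t) (at t)"
  using arclength_oval smooth_real_fun_DERIV unfolding arclength_oval_def Y_def Q_def by blast

lemma DERIV_P: "(P has_real_derivative P2 t) (at t)"
  using arclength_oval smooth_real_fun_DERIV_deriv
  unfolding arclength_oval_def X_def P_def P2_def by blast

lemma DERIV_Q: "(Q has_real_derivative Q2 t) (at t)"
  using arclength_oval smooth_real_fun_DERIV_deriv
  unfolding arclength_oval_def Y_def Q_def Q2_def by blast

lemma P2_frenet: "P2 t = - k t * Q t"
  and Q2_frenet: "Q2 t = k t * P t"
proof -
  have "((\<lambda>t. P t ^ 2 + Q t ^ 2) has_real_derivative 2 * P t * P2 t + 2 * Q t * Q2 t) (at t)"
    by (auto intro!: derivative_eq_intros DERIV_P DERIV_Q)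
  moreover have "((\<lambda>t. P t ^ 2 + Q t ^ 2) has_real_derivative 0) (at t)"
    using P_Q_unit by simp
  ultimately have "2 * P t * P2 t + 2 * Q t * Q2 t = 0"
    by (rule DERIV_unique)
  then have orth: "P t * P2 t + Q t * Q2 t = 0"
    by simp
  have "P2 t = P2 t * (P t ^ 2 + Q t ^ 2)" using P_Q_unit by simp
  also have "\<dots> = P t * (P t * P2 t + Q t * Q2 t) - Q t * (P t * Q2 t - Q t * P2 t)"
    by (simp add: algebra_simps power2_eq_square)
  finally show "P2 t = - k t * Q t"
    using orth unfolding k_def by (simp add: algebra_simps)
  have "Q2 t = Q2 t * (P t ^ 2 + Q t ^ 2)" using P_Q_unit by simp
  also have "\<dots> = Q t * (P t * P2 t + Q t * Q2 t) + P t * (P t * Q2 t - Q t * P2 t)"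
    by (simp add: algebra_simps power2_eq_square)
  finally show "Q2 t = k t * P t"
    using orth unfolding k_def by (simp add: algebra_simps)
qed

lemma gamma_has_vector_derivative: "(\<gamma> has_vector_derivative T t) (at t)"
  unfolding has_vector_derivative_complex_iff T_def using DERIV_X DERIV_Y
  by (simp add: gamma_eq)

lemma T_has_vector_derivative: "(T has_vector_derivative \<i> * of_real (k t) * T t) (at t)"
proof -
  have "((\<lambda>t. Complex (P t) (Q t)) has_vector_derivative Complex (P2 t) (Q2 t)) (at t)"
    unfolding has_vector_derivative_complex_iff using DERIV_P DERIV_Q by simp
  moreover have "Complex (P2 t) (Q2 t) = \<i> * of_real (k t) * T t"
    unfolding T_def P2_frenet Q2_frenet by (simp add: complex_eq_iff)
  ultimately show ?thesis unfolding T_def[abs_def] by simp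
qed

lemma isCont_gamma: "isCont \<gamma> t"
  using gamma_has_vector_derivative has_vector_derivative_continuous by blast

lemma isCont_T: "isCont T t"
  using T_has_vector_derivative has_vector_derivative_continuous by blast

lemma periodic_int: "\<gamma> (t + of_int n * L) = \<gamma> t"
  using periodic by (rule periodic_shift_int)

lemma gamma_eq_imp_congruent:
  assumes "\<gamma> a = \<gamma> b"
  obtains n :: int where "b = a + of_int n * L"
proof -
  obtain m :: int where m: "a - of_int m * L \<in> {0..<L}"
    using exists_shift_into_period[OF L_pos] by blast
  obtain n :: int where n: "b - of_int n * L \<in> {0..<L}"
    using exists_shift_into_period[OF L_pos] by blast
  have "\<gamma> (a - of_int m * L) = \<gamma> (b - of_int n * L)"
    using periodic_int[of "a - of_int m * L" m] periodic_int[of "b - of_int n * L" n] assms by simp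
  then have "a - of_int m * L = b - of_int n * L"
    using inj_onD[OF inj_on_period _ m n] by blast
  then have "b = a + of_int (n - m) * L"
    by (simp add: algebra_simps)
  then show ?thesis by (rule that)
qed

lemma periodic_derivative:
  assumes "\<And>t. f (t + L) = f t" "\<And>t. (f has_real_derivative f' t) (at t)"
  shows "f' (t + L) = f' t"
proof -
  have "((\<lambda>s. f (s + L)) has_real_derivative f' (t + L)) (at t)"
    using assms(2)[of "t + L"] DERIV_shift by blast
  then have "(f has_real_derivative f' (t + L)) (at t)"
    using assms(1) by simp
  then show ?thesis
    using assms(2)[of t] by (rule DERIV_unique)
qed

lemma periodic_X: "X (t + L) = X t"
  and periodic_Y: "Y (t + L) = Y t"
  unfolding X_def Y_def cx_def cy_def using periodic by simp_all

lemma periodic_P: "P (t + L) = P t"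
  using periodic_derivative[OF periodic_X DERIV_X] .

lemma periodic_Q: "Q (t + L) = Q t"
  using periodic_derivative[OF periodic_Y DERIV_Y] .

lemma periodic_k: "k (t + L) = k t"
  unfolding k_def periodic_P periodic_Q periodic_derivative[OF periodic_P DERIV_P] periodic_derivative[OF periodic_Q DERIV_Q] ..

lemma periodic_T: "T (t + L) = T t"
  unfolding T_def periodic_P periodic_Q ..

lemma tangent_angle_exists:
  "\<exists>\<theta>. (\<forall>t. T t = cis (\<theta> t)) \<and> (\<forall>t. (\<theta> has_real_derivative k t) (at t))"
proof -
  have "continuous_on UNIV T"
    using isCont_T by (simp add: continuous_on_eq_continuous_within)
  then have "\<exists>g. continuous_on UNIV g \<and> (\<forall>t. T t = exp (g t))"
    by (rule continuous_logarithm_on_contractible[OF _ contractible_UNIV T_nonzero]) auto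
  then obtain g where g: "continuous_on UNIV g" "\<And>t. T t = exp (g t)"
    by blast
  define \<theta> where "\<theta> t = Im (g t)" for t
  have T_cis: "T t = cis (\<theta> t)" for t
  proof -
    have "Re (g t) = 0"
      using norm_T[of t] g(2)[of t] by simp
    then have "g t = \<i> * of_real (\<theta> t)"
      unfolding \<theta>_def by (simp add: complex_eq_iff)
    then show ?thesis
      using g(2)[of t] by (simp add: cis_conv_exp)
  qed
  have "continuous_on UNIV \<theta>"
    unfolding \<theta>_def[abs_def] using g(1) by (rule continuous_on_Im)
  then have "(\<theta> has_real_derivative k t) (at t)" for t
    using T_cis T_has_vector_derivative by (rule DERIV_cis_lift)
  with T_cis show ?thesis by blast
qed

definition "tangent_angle =
  (SOME \<theta>. (\<forall>t. T t = cis (\<theta> t)) \<and> (\<forall>t. (\<theta> has_real_derivative k t) (at t)))"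

lemma T_eq_cis_tangent_angle: "T t = cis (tangent_angle t)"
  and DERIV_tangent_angle: "(tangent_angle has_real_derivative k t) (at t)"
  using someI_ex[OF tangent_angle_exists] unfolding tangent_angle_def[symmetric] by blast+

lemma tangent_angle_strict_mono: "a < b \<Longrightarrow> tangent_angle a < tangent_angle b"
  using DERIV_pos_imp_increasing[of a b tangent_angle] DERIV_tangent_angle k_pos by blast

lemma continuous_on_tangent_angle: "continuous_on S tangent_angle"
  using DERIV_tangent_angle by (meson DERIV_continuous continuous_at_imp_continuous_on)

section \<open>The turning of the tangent, via Hopf's secant map\<close>

lemma secant_linearization:
  assumes "e > 0"
  obtains d where "d > 0"
    "\<And>a b. \<bar>a - p\<bar> < d \<Longrightarrow> \<bar>b - p\<bar> < d \<Longrightarrow> norm (\<gamma> b - \<gamma> a - (b - a) *\<^sub>R T p) \<le> e * \<bar>b - a\<bar>"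
proof -
  obtain d where d: "d > 0" "\<And>x. dist x p < d \<Longrightarrow> dist (T x) (T p) < e"
    using isCont_T[of p] assms unfolding continuous_at_eps_delta by blast
  have "norm (\<gamma> b - \<gamma> a - (b - a) *\<^sub>R T p) \<le> e * \<bar>b - a\<bar>"
    if ab: "\<bar>a - p\<bar> < d" "\<bar>b - p\<bar> < d" for a b
  proof -
    have "norm (\<gamma> b - \<gamma> a - (\<lambda>h. h *\<^sub>R T p) (b - a)) \<le> norm (b - a) * e"
    proof (rule differentiable_bound_linearization[where S = "ball p d" and f' = "\<lambda>x h. h *\<^sub>R T x"])
      have "a \<in> ball p d" "b \<in> ball p d"
        using ab by (auto simp: dist_real_def abs_minus_commute)
      then show "a + t *\<^sub>R (b - a) \<in> ball p d" if "t \<in> {0..1}" for t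
        using that convex_ball[of p d] unfolding convex_alt by (auto simp: algebra_simps)
      show "(\<gamma> has_derivative (\<lambda>h. h *\<^sub>R T x)) (at x within ball p d)" for x
        using gamma_has_vector_derivative[of x] unfolding has_vector_derivative_def
        by (rule has_derivative_at_withinI)
      show "onorm ((\<lambda>h. h *\<^sub>R T x) - (\<lambda>h. h *\<^sub>R T p)) \<le> e" if "x \<in> ball p d" for x
      proof -
        have "(\<lambda>h. h *\<^sub>R T x) - (\<lambda>h. h *\<^sub>R T p) = (\<lambda>h. h *\<^sub>R (T x - T p))"
          by (auto simp: fun_eq_iff algebra_simps)
        moreover have "onorm (\<lambda>h::real. h *\<^sub>R (T x - T p)) = norm (T x - T p)"
          using onorm_scaleR_left[of "\<lambda>h::real. h" "T x - T p"] onorm_id[where 'a=real] bounded_linear_ident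
          by simp
        moreover have "norm (T x - T p) < e"
          using d(2)[of x] that by (simp add: dist_norm dist_commute)
        ultimately show ?thesis by simp
      qed
    qed (use d in simp)
    then show ?thesis by (simp add: mult.commute)
  qed
  with d(1) show ?thesis by (rule that)
qed

lemma chord_direction_near_tangent:
  assumes "\<epsilon> > 0"
  obtains d where "d > 0"
    "\<And>a b. \<bar>a - p\<bar> < d \<Longrightarrow> \<bar>b - p\<bar> < d \<Longrightarrow> a < b \<Longrightarrow> norm (sgn (\<gamma> b - \<gamma> a) - T p) < \<epsilon>"
proof -
  define e where "e = min (\<epsilon> / 4) (1 / 4)"
  have e: "e > 0" "e < 1" "2 * e < \<epsilon>"
    using assms unfolding e_def by auto
  obtain d where d: "d > 0"
    "\<And>a b. \<bar>a - p\<bar> < d \<Longrightarrow> \<bar>b - p\<bar> < d \<Longrightarrow> norm (\<gamma> b - \<gamma> a - (b - a) *\<^sub>R T p) \<le> e * \<bar>b - a\<bar>"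
    using secant_linearization[OF e(1)] by blast
  have "norm (sgn (\<gamma> b - \<gamma> a) - T p) < \<epsilon>"
    if "\<bar>a - p\<bar> < d" "\<bar>b - p\<bar> < d" "a < b" for a b
    using norm_sgn_sub_le[OF norm_T[of p], of "b - a" "\<gamma> b - \<gamma> a" e] d(2)[OF that(1,2)] that(3) e
    by simp
  with d(1) show ?thesis by (rule that)
qed

definition "param_triangle = {z :: real \<times> real. 0 \<le> fst z \<and> fst z \<le> snd z \<and> snd z \<le> L}"

definition "secant_map s0 z =
  (if fst z = snd z then T (s0 + fst z)
   else if z = (0, L) then - T s0
   else sgn (\<gamma> (s0 + snd z) - \<gamma> (s0 + fst z)))"

lemma convex_param_triangle: "convex param_triangle"
  unfolding convex_alt
proof (intro ballI allI impI)
  fix y z :: "real \<times> real" and u :: real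
  assume "y \<in> param_triangle" "z \<in> param_triangle" and u: "0 \<le> u \<and> u \<le> 1"
  then have "0 \<le> fst y" "fst y \<le> snd y" "snd y \<le> L" "0 \<le> fst z" "fst z \<le> snd z" "snd z \<le> L"
    unfolding param_triangle_def by auto
  with u have "0 \<le> (1 - u) * fst y" "(1 - u) * fst y \<le> (1 - u) * snd y" "(1 - u) * snd y \<le> (1 - u) * L"
    "0 \<le> u * fst z" "u * fst z \<le> u * snd z" "u * snd z \<le> u * L"
    by (simp_all add: mult_left_mono)
  then show "(1 - u) *\<^sub>R y + u *\<^sub>R z \<in> param_triangle"
    unfolding param_triangle_def by (simp add: algebra_simps)
qed

lemma chord_nonzero:
  assumes "z \<in> param_triangle" "fst z \<noteq> snd z" "z \<noteq> (0, L)"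
  shows "\<gamma> (s0 + snd z) \<noteq> \<gamma> (s0 + fst z)"
proof
  assume "\<gamma> (s0 + snd z) = \<gamma> (s0 + fst z)"
  then obtain n :: int where n: "s0 + fst z = s0 + snd z + of_int n * L"
    by (rule gamma_eq_imp_congruent)
  have "0 < snd z - fst z" "snd z - fst z < L"
    using assms unfolding param_triangle_def by (auto simp: prod_eq_iff)
  then have "of_int n * L < 0" "- L < of_int n * L"
    using n by auto
  consider "n \<ge> 0" | "n \<le> -1" by linarith
  then show False
  proof cases
    case 1
    then have "of_int n * L \<ge> 0" using L_pos by simp
    then show False using \<open>of_int n * L < 0\<close> by linarith
  next
    case 2
    then have "of_int n * L \<le> (-1) * L" using L_pos by (intro mult_right_mono) auto
    then show False using \<open>- L < of_int n * L\<close> by linarith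
  qed
qed

lemma secant_map_chord:
  "fst z \<noteq> snd z \<Longrightarrow> z \<noteq> (0, L) \<Longrightarrow> secant_map s0 z = sgn (\<gamma> (s0 + snd z) - \<gamma> (s0 + fst z))"
  unfolding secant_map_def by simp

lemma norm_secant_map:
  assumes "z \<in> param_triangle"
  shows "norm (secant_map s0 z) = 1"
proof (cases "fst z = snd z \<or> z = (0, L)")
  case True
  then show ?thesis unfolding secant_map_def using norm_T by auto
next
  case False
  then show ?thesis
    using secant_map_chord chord_nonzero[OF assms] by (simp add: norm_sgn)
qed

lemma secant_map_continuous_diagonal:
  assumes "(s, s) \<in> param_triangle"
  shows "continuous (at (s, s) within param_triangle) (secant_map s0)"
  unfolding continuous_within_eps_delta
proof (intro allI impI)
  fix \<epsilon> :: real assume "\<epsilon> > 0"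
  obtain d1 where d1: "d1 > 0" "\<And>a b. \<bar>a - (s0 + s)\<bar> < d1 \<Longrightarrow> \<bar>b - (s0 + s)\<bar> < d1 \<Longrightarrow> a < b \<Longrightarrow>
      norm (sgn (\<gamma> b - \<gamma> a) - T (s0 + s)) < \<epsilon>"
    using chord_direction_near_tangent[OF \<open>\<epsilon> > 0\<close>] by blast
  obtain d2 where d2: "d2 > 0" "\<And>x. dist x (s0 + s) < d2 \<Longrightarrow> dist (T x) (T (s0 + s)) < \<epsilon>"
    using isCont_T[of "s0 + s"] \<open>\<epsilon> > 0\<close> unfolding continuous_at_eps_delta by blast
  define d where "d = min (min d1 d2) (L / 2)"
  have "dist (secant_map s0 (a, b)) (secant_map s0 (s, s)) < \<epsilon>"
    if ab: "(a, b) \<in> param_triangle" "dist (a, b) (s, s) < d" for a b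
  proof -
    have "\<bar>a - s\<bar> < d" "\<bar>b - s\<bar> < d"
      using ab(2) dist_fst_le[of "(a, b)" "(s, s)"] dist_snd_le[of "(a, b)" "(s, s)"]
      by (auto simp: dist_real_def)
    then have close: "\<bar>s0 + a - (s0 + s)\<bar> < d1" "\<bar>s0 + b - (s0 + s)\<bar> < d1"
      "dist (s0 + a) (s0 + s) < d2" "(a, b) \<noteq> (0, L)"
      unfolding d_def using ab(1) by (auto simp: dist_real_def param_triangle_def)
    consider "a = b" | "a < b"
      using ab(1) unfolding param_triangle_def by fastforce
    then show ?thesis
    proof cases
      case 1
      then show ?thesis using d2(2)[OF close(3)] by (simp add: secant_map_def)
    next
      case 2
      then have "secant_map s0 (a, b) = sgn (\<gamma> (s0 + b) - \<gamma> (s0 + a))"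
        using close(4) secant_map_chord[of "(a, b)"] by simp
      then show ?thesis using d1(2)[OF close(1,2)] 2 by (simp add: secant_map_def dist_norm)
    qed
  qed
  moreover have "d > 0" using d1 d2 L_pos unfolding d_def by auto
  ultimately show "\<exists>d>0. \<forall>z\<in>param_triangle. dist z (s, s) < d \<longrightarrow>
      dist (secant_map s0 z) (secant_map s0 (s, s)) < \<epsilon>"
    by force
qed

lemma secant_map_continuous_corner:
  "continuous (at (0, L) within param_triangle) (secant_map s0)"
  unfolding continuous_within_eps_delta
proof (intro allI impI)
  fix \<epsilon> :: real assume "\<epsilon> > 0"
  obtain d1 where d1: "d1 > 0" "\<And>a b. \<bar>a - s0\<bar> < d1 \<Longrightarrow> \<bar>b - s0\<bar> < d1 \<Longrightarrow> a < b \<Longrightarrow>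
      norm (sgn (\<gamma> b - \<gamma> a) - T s0) < \<epsilon>"
    using chord_direction_near_tangent[OF \<open>\<epsilon> > 0\<close>] by blast
  define d where "d = min d1 (L / 2)"
  have corner: "secant_map s0 (0, L) = - T s0"
    unfolding secant_map_def using L_pos by simp
  have "dist (secant_map s0 (a, b)) (- T s0) < \<epsilon>"
    if ab: "(a, b) \<in> param_triangle" "dist (a, b) (0, L) < d" for a b
  proof (cases "(a, b) = (0, L)")
    case True
    then show ?thesis using corner \<open>\<epsilon> > 0\<close> by simp
  next
    case False
    have "\<bar>a\<bar> < d" "\<bar>b - L\<bar> < d"
      using ab(2) dist_fst_le[of "(a, b)" "(0, L)"] dist_snd_le[of "(a, b)" "(0, L)"]
      by (auto simp: dist_real_def)
    then have close: "\<bar>s0 + (b - L) - s0\<bar> < d1" "\<bar>s0 + a - s0\<bar> < d1" "b - L < a" "a \<noteq> b"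
      unfolding d_def using ab(1) False by (auto simp: param_triangle_def)
    \<comment> \<open>By periodicity, the chord from a to b is the reversed chord from b - L to a.\<close>
    have "\<gamma> (s0 + b) - \<gamma> (s0 + a) = - (\<gamma> (s0 + a) - \<gamma> (s0 + (b - L)))"
      using periodic[of "s0 + (b - L)"] by (simp add: algebra_simps)
    then have "secant_map s0 (a, b) = - sgn (\<gamma> (s0 + a) - \<gamma> (s0 + (b - L)))"
      using False close(4) secant_map_chord[of "(a, b)"] by (simp flip: sgn_minus)
    then show ?thesis
      using d1(2)[OF close(1,2) _] close(3) by (simp add: dist_norm norm_minus_commute algebra_simps)
  qed
  moreover have "d > 0" using d1 L_pos unfolding d_def by auto
  ultimately show "\<exists>d>0. \<forall>z\<in>param_triangle. dist z (0, L) < d \<longrightarrow>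
      dist (secant_map s0 z) (secant_map s0 (0, L)) < \<epsilon>"
    using corner by force
qed

lemma secant_map_continuous_off_diagonal:
  assumes z: "z \<in> param_triangle" "fst z \<noteq> snd z" "z \<noteq> (0, L)"
  shows "continuous (at z within param_triangle) (secant_map s0)"
proof -
  define chord where "chord z' = sgn (\<gamma> (s0 + snd z') - \<gamma> (s0 + fst z'))" for z' :: "real \<times> real"
  have "isCont (\<lambda>z'. \<gamma> (s0 + snd z')) z" "isCont (\<lambda>z'. \<gamma> (s0 + fst z')) z"
    by (auto intro!: isCont_o2[OF _ isCont_gamma] continuous_intros)
  then have "isCont chord z"
    unfolding chord_def sgn_div_norm using chord_nonzero[OF z]
    by (intro continuous_intros) auto
  then have "continuous (at z within param_triangle) chord"
    by (rule continuous_at_imp_continuous_at_within)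
  moreover have "min ((snd z - fst z) / 2) (dist z (0, L)) > 0"
    using z unfolding param_triangle_def by auto
  moreover have "chord z' = secant_map s0 z'"
    if "dist z' z < min ((snd z - fst z) / 2) (dist z (0, L))" for z'
  proof -
    have "\<bar>fst z' - fst z\<bar> < (snd z - fst z) / 2" "\<bar>snd z' - snd z\<bar> < (snd z - fst z) / 2"
      using that dist_fst_le[of z' z] dist_snd_le[of z' z] by (auto simp: dist_real_def)
    then have "fst z' \<noteq> snd z'" by argo
    moreover have "z' \<noteq> (0, L)" using that by (auto simp: dist_commute)
    ultimately show ?thesis unfolding chord_def using secant_map_chord by simp
  qed
  ultimately show ?thesis
    using continuous_transform_within[OF _ _ z(1)] by blast
qed

lemma continuous_on_secant_map: "continuous_on param_triangle (secant_map s0)"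
  unfolding continuous_on_eq_continuous_within
proof
  fix z assume z: "z \<in> param_triangle"
  consider "fst z = snd z" | "z = (0, L)" | "fst z \<noteq> snd z" "z \<noteq> (0, L)" by blast
  then show "continuous (at z within param_triangle) (secant_map s0)"
  proof cases
    case 1
    then show ?thesis using secant_map_continuous_diagonal[of "fst z"] z by (metis prod.collapse)
  qed (use secant_map_continuous_corner secant_map_continuous_off_diagonal z in auto)
qed

lemma exists_lowest_point:
  obtains s0 where "\<And>t. Y s0 \<le> Y t"
proof -
  have cont: "continuous_on {0..L} Y"
    using DERIV_isCont[OF DERIV_Y] by (simp add: continuous_at_imp_continuous_on)
  obtain s0 where s0: "\<forall>y\<in>{0..L}. Y s0 \<le> Y y"
    using continuous_attains_inf[OF compact_Icc _ cont] L_pos by auto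
  have "Y s0 \<le> Y t" for t
  proof -
    obtain n :: int where n: "t - of_int n * L \<in> {0..<L}"
      using exists_shift_into_period[OF L_pos] by blast
    have "Y (t - of_int n * L) = Y t"
      using periodic_shift_int[where f = Y, OF periodic_Y, of "t - of_int n * L" n] by simp
    moreover have "t - of_int n * L \<in> {0..L}" using n by auto
    ultimately show ?thesis using s0 by fastforce
  qed
  then show ?thesis by (rule that)
qed

lemma lowest_point_tangent:
  assumes "\<And>t. Y s0 \<le> Y t"
  shows "T s0 = of_real (P s0)" "P s0 = 1 \<or> P s0 = -1"
proof -
  have "Q s0 = 0"
    using DERIV_local_min[OF DERIV_Y, of 1 s0] assms by auto
  then show "T s0 = of_real (P s0)"
    unfolding T_def by (simp add: complex_eq_iff)
  have "(P s0)\<^sup>2 = 1"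
    using P_Q_unit[of s0] \<open>Q s0 = 0\<close> by simp
  then show "P s0 = 1 \<or> P s0 = -1"
    by (simp add: power2_eq_1_iff)
qed

lemma secant_map_lift:
  obtains \<phi> where "continuous_on param_triangle \<phi>"
    "\<And>z. z \<in> param_triangle \<Longrightarrow> cis (\<phi> z) = secant_map s0 z"
proof -
  have "secant_map s0 z \<noteq> 0" if "z \<in> param_triangle" for z
    using norm_secant_map[OF that, of s0] by auto
  then have "\<exists>g. continuous_on param_triangle g \<and> (\<forall>z\<in>param_triangle. secant_map s0 z = exp (g z))"
    by (rule continuous_logarithm_on_contractible[OF continuous_on_secant_map
          convex_imp_contractible[OF convex_param_triangle]]) auto
  then obtain g where g: "continuous_on param_triangle g"
    "\<And>z. z \<in> param_triangle \<Longrightarrow> secant_map s0 z = exp (g z)"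
    by blast
  have "cis (Im (g z)) = secant_map s0 z" if "z \<in> param_triangle" for z
  proof -
    have "Re (g z) = 0"
      using norm_secant_map[OF that, of s0] g(2)[OF that] by simp
    then have "g z = \<i> * of_real (Im (g z))"
      by (simp add: complex_eq_iff)
    then show ?thesis
      using g(2)[OF that] by (metis cis_conv_exp)
  qed
  moreover have "continuous_on param_triangle (\<lambda>z. Im (g z))"
    using g(1) by (rule continuous_on_Im)
  ultimately show ?thesis using that by blast
qed

lemma in_param_triangle: "t \<in> {0..L} \<Longrightarrow> (t, t) \<in> param_triangle \<and> (0, t) \<in> param_triangle \<and> (t, L) \<in> param_triangle"
  unfolding param_triangle_def by auto

lemma corners_in_param_triangle: "(0, 0) \<in> param_triangle" "(0, L) \<in> param_triangle" "(L, L) \<in> param_triangle"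
  unfolding param_triangle_def using L_pos by auto

lemma sin_diff_lift:
  assumes "\<And>z. z \<in> param_triangle \<Longrightarrow> cis (\<phi> z) = secant_map s0 z"
    and "z \<in> param_triangle" "w \<in> param_triangle" "secant_map s0 w = of_real \<sigma>" "\<sigma> = 1 \<or> \<sigma> = -1"
  shows "\<sigma> * sin (\<phi> z - \<phi> w) = Im (secant_map s0 z)"
proof -
  have "sin (\<phi> z - \<phi> w) = Im (cis (\<phi> z) / cis (\<phi> w))"
    by (simp add: cis_divide)
  also have "\<dots> = Im (secant_map s0 z) / \<sigma>"
    using assms by (simp add: Im_divide_of_real)
  finally show ?thesis using assms(5) by auto
qed

lemma secant_lift_diagonal:
  assumes "continuous_on param_triangle \<phi>" "\<And>z. z \<in> param_triangle \<Longrightarrow> cis (\<phi> z) = secant_map s0 z"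
  shows "\<phi> (L, L) - \<phi> (0, 0) = tangent_angle (s0 + L) - tangent_angle s0"
proof -
  have "\<phi> (L, L) - tangent_angle (s0 + L) = \<phi> (0, 0) - tangent_angle (s0 + 0)"
  proof (rule cis_lifts_diff_constant[where f = "\<lambda>s. \<phi> (s, s)" and g = "\<lambda>s. tangent_angle (s0 + s)"])
    show "continuous_on {0..L} (\<lambda>s. \<phi> (s, s))"
      by (rule continuous_on_compose2[OF assms(1)]) (auto intro!: continuous_intros simp: in_param_triangle)
    show "continuous_on {0..L} (\<lambda>s. tangent_angle (s0 + s))"
      by (rule continuous_on_compose2[OF continuous_on_tangent_angle[of UNIV]]) (auto intro!: continuous_intros)
    show "cis (\<phi> (s, s)) = cis (tangent_angle (s0 + s))" if "s \<in> {0..L}" for s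
      using assms(2) in_param_triangle[OF that] T_eq_cis_tangent_angle[of "s0 + s"]
      by (simp add: secant_map_def)
  qed (use L_pos in auto)
  then show ?thesis by simp
qed

lemma secant_lift_left_edge:
  assumes lift: "continuous_on param_triangle \<phi>" "\<And>z. z \<in> param_triangle \<Longrightarrow> cis (\<phi> z) = secant_map s0 z"
    and lowest: "\<And>t. Y s0 \<le> Y t"
  shows "\<phi> (0, L) - \<phi> (0, 0) = P s0 * pi"
proof -
  note T_s0 = lowest_point_tangent[OF lowest]
  have cont: "continuous_on {0..L} (\<lambda>t. \<phi> (0, t) - \<phi> (0, 0))"
    by (intro continuous_intros continuous_on_compose2[OF lift(1)])
      (auto intro!: continuous_intros simp: in_param_triangle)
  have "(\<lambda>t. \<phi> (0, t) - \<phi> (0, 0)) L = P s0 * pi"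
  proof (rule cis_lift_half_turn[OF cont _ _ _ T_s0(2)])
    have "cis (\<phi> (0, L) - \<phi> (0, 0)) = secant_map s0 (0, L) / secant_map s0 (0, 0)"
      using lift(2)[of "(0, L)"] lift(2)[of "(0, 0)"] corners_in_param_triangle by (simp flip: cis_divide)
    also have "\<dots> = -1"
      unfolding secant_map_def using L_pos T_nonzero[of s0] by simp
    finally show "cis (\<phi> (0, L) - \<phi> (0, 0)) = -1" .
    fix t assume t: "t \<in> {0..L}"
    have "P s0 * sin (\<phi> (0, t) - \<phi> (0, 0)) = Im (secant_map s0 (0, t))"
      using lift(2) in_param_triangle[OF t] in_param_triangle[of 0] L_pos T_s0
      by (intro sin_diff_lift) (auto simp: secant_map_def)
    moreover have "Im (secant_map s0 (0, t)) \<ge> 0"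
    proof (cases "t = 0 \<or> t = L")
      case True
      then show ?thesis using T_s0(1) by (auto simp: secant_map_def)
    next
      case False
      then have "secant_map s0 (0, t) = sgn (\<gamma> (s0 + t) - \<gamma> s0)"
        using secant_map_chord[of "(0, t)"] by simp
      then show ?thesis
        using lowest[of "s0 + t"] by (simp add: gamma_eq)
    qed
    ultimately show "0 \<le> P s0 * sin (\<phi> (0, t) - \<phi> (0, 0))" by simp
  qed (use L_pos in auto)
  then show ?thesis by simp
qed

lemma secant_lift_top_edge:
  assumes lift: "continuous_on param_triangle \<phi>" "\<And>z. z \<in> param_triangle \<Longrightarrow> cis (\<phi> z) = secant_map s0 z"
    and lowest: "\<And>t. Y s0 \<le> Y t"
  shows "\<phi> (L, L) - \<phi> (0, L) = P s0 * pi"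
proof -
  note T_s0 = lowest_point_tangent[OF lowest]
  have top: "secant_map s0 (0, L) = of_real (- P s0)"
    unfolding secant_map_def using L_pos T_s0(1) by simp
  have cont: "continuous_on {0..L} (\<lambda>t. \<phi> (t, L) - \<phi> (0, L))"
    by (intro continuous_intros continuous_on_compose2[OF lift(1)])
      (auto intro!: continuous_intros simp: in_param_triangle)
  have "(\<lambda>t. \<phi> (t, L) - \<phi> (0, L)) L = P s0 * pi"
  proof (rule cis_lift_half_turn[OF cont _ _ _ T_s0(2)])
    have "cis (\<phi> (L, L) - \<phi> (0, L)) = secant_map s0 (L, L) / secant_map s0 (0, L)"
      using lift(2)[of "(L, L)"] lift(2)[of "(0, L)"] corners_in_param_triangle by (simp flip: cis_divide)
    also have "\<dots> = -1"
      unfolding secant_map_def using L_pos T_nonzero[of s0] periodic_T[of s0] by (simp add: add.commute)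
    finally show "cis (\<phi> (L, L) - \<phi> (0, L)) = -1" .
    fix t assume t: "t \<in> {0..L}"
    have "- P s0 * sin (\<phi> (t, L) - \<phi> (0, L)) = Im (secant_map s0 (t, L))"
      using lift(2) in_param_triangle[OF t] in_param_triangle[of L] L_pos T_s0(2) top
      by (intro sin_diff_lift) auto
    moreover have "Im (secant_map s0 (t, L)) \<le> 0"
    proof (cases "t = 0 \<or> t = L")
      case True
      then show ?thesis using T_s0(1) periodic_T[of s0] by (auto simp: secant_map_def add.commute)
    next
      case False
      then have "secant_map s0 (t, L) = sgn (\<gamma> s0 - \<gamma> (s0 + t))"
        using secant_map_chord[of "(t, L)"] periodic[of s0] by simp
      then show ?thesis
        using lowest[of "s0 + t"] by (simp add: gamma_eq divide_nonpos_nonneg)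
    qed
    ultimately show "0 \<le> P s0 * sin (\<phi> (t, L) - \<phi> (0, L))" by simp
  qed (use L_pos in auto)
  then show ?thesis by simp
qed

lemma tangent_angle_turn: "tangent_angle (t + L) = tangent_angle t + 2 * pi"
proof -
  obtain s0 where lowest: "\<And>t. Y s0 \<le> Y t"
    using exists_lowest_point by blast
  obtain \<phi> where lift: "continuous_on param_triangle \<phi>"
    "\<And>z. z \<in> param_triangle \<Longrightarrow> cis (\<phi> z) = secant_map s0 z"
    using secant_map_lift by blast
  have turn: "tangent_angle (s0 + L) - tangent_angle s0 = 2 * P s0 * pi"
    using secant_lift_diagonal[OF lift] secant_lift_left_edge[OF lift lowest]
      secant_lift_top_edge[OF lift lowest] by simp
  moreover have "tangent_angle s0 < tangent_angle (s0 + L)"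
    using tangent_angle_strict_mono L_pos by simp
  ultimately have "0 < P s0 * pi"
    by linarith
  then have "P s0 = 1"
    using lowest_point_tangent(2)[OF lowest] pi_gt_zero by (auto simp: zero_less_mult_iff)
  have "((\<lambda>t. tangent_angle (t + L) - tangent_angle t) has_real_derivative 0) (at x)" for x
    using DERIV_diff[OF DERIV_shift[THEN iffD1, OF DERIV_tangent_angle[of "x + L"]] DERIV_tangent_angle[of x]]
    by (simp add: periodic_k)
  then have "tangent_angle (t + L) - tangent_angle t = tangent_angle (s0 + L) - tangent_angle s0"
    using DERIV_isconst_all by blast
  with turn \<open>P s0 = 1\<close> show ?thesis by simp
qed

section \<open>Strict convexity\<close>

lemma curve_left_of_tangent:
  assumes "\<not> (\<exists>n::int. x' = x + of_int n * L)"
  shows "Im (cnj (T x) * (\<gamma> x' - \<gamma> x)) > 0"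
proof -
  obtain n :: int where n: "x' - x - of_int n * L \<in> {0..<L}"
    using exists_shift_into_period[OF L_pos] by blast
  define y where "y = x' - of_int n * L"
  have gamma_y: "\<gamma> y = \<gamma> x'"
    unfolding y_def using periodic_int[of "x' - of_int n * L" n] by simp
  have "y \<noteq> x"
    using assms unfolding y_def by (metis add.commute diff_add_cancel)
  then have y: "x < y" "y < x + L"
    using n unfolding y_def by auto
  define h where "h t = Im (cnj (T x) * (\<gamma> t - \<gamma> x))" for t
  have DERIV_h: "(h has_real_derivative sin (tangent_angle t - tangent_angle x)) (at t)" for t
  proof -
    have "((\<lambda>t. cnj (T x) * (\<gamma> t - \<gamma> x)) has_vector_derivative cnj (T x) * T t) (at t)"
      using gamma_has_vector_derivative[of t] by (auto intro!: derivative_eq_intros)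
    moreover have "Im (cnj (T x) * T t) = sin (tangent_angle t - tangent_angle x)"
      unfolding T_eq_cis_tangent_angle by (simp add: sin_diff)
    ultimately show ?thesis
      unfolding h_def[abs_def] has_vector_derivative_complex_iff by simp
  qed
  have cont_h: "continuous_on S h" for S
    using DERIV_h by (meson DERIV_continuous continuous_at_imp_continuous_on)
  \<comment> \<open>h vanishes at x and x + L; it increases while the tangent has turned by less than pi
    and decreases afterwards.\<close>
  show ?thesis
  proof (cases "tangent_angle y - tangent_angle x \<le> pi")
    case True
    have "h x < h y"
    proof (rule DERIV_pos_imp_increasing_open[OF y(1) _ cont_h])
      fix t assume t: "x < t" "t < y"
      then have "0 < tangent_angle t - tangent_angle x" "tangent_angle t - tangent_angle x < pi"
        using tangent_angle_strict_mono[OF t(1)] tangent_angle_strict_mono[OF t(2)] True by auto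
      then show "\<exists>d. (h has_real_derivative d) (at t) \<and> 0 < d"
        using DERIV_h sin_gt_zero by blast
    qed
    then show ?thesis using gamma_y unfolding h_def by simp
  next
    case False
    have "h (x + L) < h y"
    proof (rule DERIV_neg_imp_decreasing_open[OF y(2) _ cont_h])
      fix t assume t: "y < t" "t < x + L"
      then have "pi < tangent_angle t - tangent_angle x" "tangent_angle t - tangent_angle x < 2 * pi"
        using tangent_angle_strict_mono[OF t(1)] tangent_angle_strict_mono[OF t(2)] False
          tangent_angle_turn[of x] by auto
      then have "sin (tangent_angle t - tangent_angle x - pi) > 0"
        by (intro sin_gt_zero) auto
      then have "sin (tangent_angle t - tangent_angle x) < 0"
        by (simp add: sin_diff)
      then show "\<exists>d. (h has_real_derivative d) (at t) \<and> d < 0"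
        using DERIV_h by blast
    qed
    then show ?thesis using gamma_y periodic[of x] unfolding h_def by simp
  qed
qed

section \<open>Tangent lines meeting outside the oval\<close>

definition "cross u v = P u * Q v - Q u * P v"
definition "dot u v = P u * P v + Q u * Q v"
definition "chord_x_Tv u v = (X v - X u) * Q v - (Y v - Y u) * P v"
definition "Tu_x_chord u v = P u * (Y v - Y u) - Q u * (X v - X u)"
definition "Tu_dot_chord u v = P u * (X v - X u) + Q u * (Y v - Y u)"
definition "chord_dot_Tv u v = (X v - X u) * P v + (Y v - Y u) * Q v"

text \<open>Writing \<open>\<gamma> v - \<gamma> u = a T u + b T v\<close> and taking cross products with \<open>T v\<close> and \<open>T u\<close>
  gives \<open>a = seg_neg u v\<close> and \<open>b = seg_pos u v\<close>.\<close>
definition "seg_neg u v = chord_x_Tv u v / cross u v"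
definition "seg_pos u v = Tu_x_chord u v / cross u v"
definition "tangent_meet u v = \<gamma> u + of_real (seg_neg u v) * T u"
definition "dH_dv u v = 1 + k v * Tu_x_chord u v / (1 + dot u v)"

lemma cross_sq_plus_dot_sq: "(cross u v)\<^sup>2 + (dot u v)\<^sup>2 = 1"
proof -
  have "(cross u v)\<^sup>2 + (dot u v)\<^sup>2 = ((P u)\<^sup>2 + (Q u)\<^sup>2) * ((P v)\<^sup>2 + (Q v)\<^sup>2)"
    unfolding cross_def dot_def by (simp add: power2_eq_square algebra_simps)
  then show ?thesis using P_Q_unit by simp
qed

lemma one_plus_dot_nonzero: "cross u v \<noteq> 0 \<Longrightarrow> 1 + dot u v \<noteq> 0"
  using cross_sq_plus_dot_sq[of u v] by (auto simp: add_eq_0_iff)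

lemma chord_dot_Tv_identity: "chord_dot_Tv u v * cross u v - chord_x_Tv u v * dot u v = Tu_x_chord u v"
proof -
  have "chord_dot_Tv u v * cross u v - chord_x_Tv u v * dot u v = ((P v)\<^sup>2 + (Q v)\<^sup>2) * Tu_x_chord u v"
    unfolding cross_def dot_def chord_dot_Tv_def chord_x_Tv_def Tu_x_chord_def
    by (simp add: power2_eq_square algebra_simps)
  then show ?thesis using P_Q_unit by simp
qed

lemma Tu_dot_chord_identity: "Tu_dot_chord u v * cross u v - Tu_x_chord u v * dot u v = chord_x_Tv u v"
proof -
  have "Tu_dot_chord u v * cross u v - Tu_x_chord u v * dot u v = ((P u)\<^sup>2 + (Q u)\<^sup>2) * chord_x_Tv u v"
    unfolding cross_def dot_def Tu_dot_chord_def chord_x_Tv_def Tu_x_chord_def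
    by (simp add: power2_eq_square algebra_simps)
  then show ?thesis using P_Q_unit by simp
qed

lemma P_rotate: "dot u v * P u - cross u v * Q u = P v"
  and Q_rotate: "dot u v * Q u + cross u v * P u = Q v"
proof -
  have "dot u v * P u - cross u v * Q u = P v * ((P u)\<^sup>2 + (Q u)\<^sup>2)"
    "dot u v * Q u + cross u v * P u = Q v * ((P u)\<^sup>2 + (Q u)\<^sup>2)"
    unfolding dot_def cross_def by (simp_all add: power2_eq_square algebra_simps)
  then show "dot u v * P u - cross u v * Q u = P v" "dot u v * Q u + cross u v * P u = Q v"
    using P_Q_unit by simp_all
qed

lemma tangent_meet_neg: "tangent_meet u v - \<gamma> u = of_real (seg_neg u v) * T u"
  unfolding tangent_meet_def by simp

lemma tangent_meet_pos:
  assumes "cross u v \<noteq> 0"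
  shows "\<gamma> v - tangent_meet u v = of_real (seg_pos u v) * T v"
proof -
  have "X v - X u - seg_neg u v * P u = seg_pos u v * P v"
    "Y v - Y u - seg_neg u v * Q u = seg_pos u v * Q v"
    using assms unfolding seg_neg_def seg_pos_def chord_x_Tv_def Tu_x_chord_def cross_def
    by (simp_all add: field_simps)
  then show ?thesis
    unfolding tangent_meet_def T_def by (simp add: gamma_eq complex_eq_iff)
qed

lemma tangent_lines_meet_unique:
  assumes "cross u v \<noteq> 0" "B - \<gamma> u = of_real a * T u" "\<gamma> v - B = of_real b * T v"
  shows "a = seg_neg u v" "b = seg_pos u v"
proof -
  have "\<gamma> v - \<gamma> u = of_real a * T u + of_real b * T v"
    using assms(2,3) by (simp add: algebra_simps)
  then have "X v - X u = a * P u + b * P v" "Y v - Y u = a * Q u + b * Q v"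
    unfolding T_def by (simp_all add: gamma_eq complex_eq_iff)
  then have "chord_x_Tv u v = a * cross u v" "Tu_x_chord u v = b * cross u v"
    unfolding chord_x_Tv_def Tu_x_chord_def cross_def by (simp_all add: algebra_simps)
  then show "a = seg_neg u v" "b = seg_pos u v"
    unfolding seg_neg_def seg_pos_def using assms(1) by simp_all
qed

lemma DERIV_chord_x_Tv_v: "((\<lambda>v. chord_x_Tv u v) has_real_derivative k v * chord_dot_Tv u v) (at v)"
  unfolding chord_x_Tv_def chord_dot_Tv_def
  by (rule DERIV_cong, (rule derivative_eq_intros DERIV_X DERIV_Y DERIV_P DERIV_Q refl)+)
    (simp add: P2_frenet Q2_frenet algebra_simps)

lemma DERIV_cross_v: "((\<lambda>v. cross u v) has_real_derivative k v * dot u v) (at v)"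
  unfolding cross_def dot_def
  by (rule DERIV_cong, (rule derivative_eq_intros DERIV_P DERIV_Q refl)+)
    (simp add: P2_frenet Q2_frenet algebra_simps)

lemma DERIV_Tu_x_chord_v: "((\<lambda>v. Tu_x_chord u v) has_real_derivative cross u v) (at v)"
  unfolding Tu_x_chord_def cross_def
  by (rule DERIV_cong, (rule derivative_eq_intros DERIV_X DERIV_Y refl)+)
    (simp add: algebra_simps)

lemma DERIV_chord_x_Tv_u: "((\<lambda>u. chord_x_Tv u v) has_real_derivative - cross u v) (at u)"
  unfolding chord_x_Tv_def cross_def
  by (rule DERIV_cong, (rule derivative_eq_intros DERIV_X DERIV_Y refl)+)
    (simp add: algebra_simps)

lemma DERIV_cross_u: "((\<lambda>u. cross u v) has_real_derivative - k u * dot u v) (at u)"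
  unfolding cross_def dot_def
  by (rule DERIV_cong, (rule derivative_eq_intros DERIV_P DERIV_Q refl)+)
    (simp add: P2_frenet Q2_frenet algebra_simps)

lemma DERIV_Tu_x_chord_u: "((\<lambda>u. Tu_x_chord u v) has_real_derivative - k u * Tu_dot_chord u v) (at u)"
  unfolding Tu_x_chord_def Tu_dot_chord_def
  by (rule DERIV_cong, (rule derivative_eq_intros DERIV_X DERIV_Y DERIV_P DERIV_Q refl)+)
    (simp add: P2_frenet Q2_frenet algebra_simps)

lemma DERIV_dot_u: "((\<lambda>u. dot u v) has_real_derivative k u * cross u v) (at u)"
  unfolding cross_def dot_def
  by (rule DERIV_cong, (rule derivative_eq_intros DERIV_P DERIV_Q refl)+)
    (simp add: P2_frenet Q2_frenet algebra_simps)

lemma DERIV_seg_neg_v: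
  assumes "cross u v \<noteq> 0"
  shows "((\<lambda>v. seg_neg u v) has_real_derivative k v * Tu_x_chord u v / (cross u v)\<^sup>2) (at v)"
  unfolding seg_neg_def
  by (rule DERIV_cong[OF DERIV_divide[OF DERIV_chord_x_Tv_v DERIV_cross_v assms]])
    (use chord_dot_Tv_identity[of u v] in \<open>auto simp: power2_eq_square algebra_simps diff_divide_distrib[symmetric]\<close>)

lemma DERIV_Hfun_v:
  assumes "cross u v \<noteq> 0"
  shows "((\<lambda>v. seg_neg u v + seg_pos u v) has_real_derivative dH_dv u v) (at v)"
proof -
  have unit: "cross u v * cross u v + dot u v * dot u v = 1"
    using cross_sq_plus_dot_sq[of u v] by (simp add: power2_eq_square)
  show ?thesis
    unfolding seg_pos_def[abs_def]
    by (rule DERIV_cong[OF DERIV_add[OF DERIV_seg_neg_v[OF assms] DERIV_divide[OF DERIV_Tu_x_chord_v DERIV_cross_v assms]]])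
      (use assms one_plus_dot_nonzero[OF assms] in \<open>simp add: dH_dv_def power2_eq_square field_simps,
        simp add: unit flip: distrib_left\<close>)
qed

lemma DERIV_dH_dv_u:
  assumes "cross u v \<noteq> 0"
  shows "((\<lambda>u. dH_dv u v) has_real_derivative
    - k u * k v * (seg_neg u v + seg_pos u v) / (1 + dot u v)) (at u)"
proof -
  define s c a b t where "s = cross u v" "c = dot u v" "a = chord_x_Tv u v" "b = Tu_x_chord u v"
    "t = Tu_dot_chord u v"
  have s: "s \<noteq> 0" and c: "1 + c \<noteq> 0" and sc: "s\<^sup>2 + c\<^sup>2 = 1" and t: "t * s - b * c = a"
    using assms one_plus_dot_nonzero[OF assms] cross_sq_plus_dot_sq[of u v] Tu_dot_chord_identity[of u v]
    unfolding s_c_a_b_t_def by simp_all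
  have "(t * (1 + c) + b * s) * s = (a + b) * (1 + c)"
  proof -
    have "(t * (1 + c) + b * s) * s = (a + b * c) * (1 + c) + b * s\<^sup>2"
      using t by (simp add: algebra_simps power2_eq_square)
    also have "\<dots> = (a + b) * (1 + c) + b * (s\<^sup>2 + c\<^sup>2 - 1)"
      by (simp add: algebra_simps power2_eq_square)
    also have "\<dots> = (a + b) * (1 + c)"
      using sc by simp
    finally show ?thesis .
  qed
  then have key: "t * (1 + c) + b * s = (a + b) * (1 + c) / s"
    using s by (simp add: eq_divide_eq)
  have "(- (k u * t * k v * (1 + c)) - k v * b * (k u * s)) / ((1 + c) * (1 + c))
      = - (k u * k v) * (t * (1 + c) + b * s) / (1 + c)\<^sup>2"
    by (simp add: algebra_simps power2_eq_square)
  also have "\<dots> = - k u * k v * (a / s + b / s) / (1 + c)"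
  proof -
    have "- (k u * k v) * ((a + b) * z / s) / z\<^sup>2 = - k u * k v * (a / s + b / s) / z" if "z \<noteq> 0" for z
      using s that by (simp add: field_simps power2_eq_square)
    then show ?thesis unfolding key using c by blast
  qed
  finally have derivative_value: "(- (k u * t * k v * (1 + c)) - k v * b * (k u * s)) / ((1 + c) * (1 + c))
      = - k u * k v * (a / s + b / s) / (1 + c)" .
  show ?thesis
    unfolding dH_dv_def[abs_def]
    by (rule DERIV_cong, (rule derivative_eq_intros DERIV_Tu_x_chord_u DERIV_dot_u
          one_plus_dot_nonzero[OF assms] refl)+)
      (use derivative_value in \<open>simp add: s_c_a_b_t_def seg_neg_def seg_pos_def\<close>)
qed

lemma DERIV_seg_neg_u:
  assumes "cross u v \<noteq> 0"
  shows "((\<lambda>u. seg_neg u v) has_real_derivative k u * seg_neg u v * dot u v / cross u v - 1) (at u)"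
  unfolding seg_neg_def
  by (rule DERIV_cong[OF DERIV_divide[OF DERIV_chord_x_Tv_u DERIV_cross_u assms]])
    (use assms in \<open>simp add: power2_eq_square field_simps\<close>)

lemma DERIV_Re_tangent_meet_u:
  assumes "cross u v \<noteq> 0"
  shows "((\<lambda>u. Re (tangent_meet u v)) has_real_derivative k u * seg_neg u v * P v / cross u v) (at u)"
proof -
  have "Re (tangent_meet u v) = X u + seg_neg u v * P u" for u
    unfolding tangent_meet_def T_def by (simp add: gamma_eq)
  moreover have "((\<lambda>u. X u + seg_neg u v * P u) has_real_derivative
      k u * seg_neg u v * (dot u v * P u - cross u v * Q u) / cross u v) (at u)"
    by (rule DERIV_cong[OF DERIV_add[OF DERIV_X DERIV_mult[OF DERIV_seg_neg_u[OF assms] DERIV_P]]])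
      (use assms in \<open>simp add: P2_frenet field_simps\<close>)
  ultimately show ?thesis unfolding P_rotate by simp
qed

lemma DERIV_Im_tangent_meet_u:
  assumes "cross u v \<noteq> 0"
  shows "((\<lambda>u. Im (tangent_meet u v)) has_real_derivative k u * seg_neg u v * Q v / cross u v) (at u)"
proof -
  have "Im (tangent_meet u v) = Y u + seg_neg u v * Q u" for u
    unfolding tangent_meet_def T_def by (simp add: gamma_eq)
  moreover have "((\<lambda>u. Y u + seg_neg u v * Q u) has_real_derivative
      k u * seg_neg u v * (dot u v * Q u + cross u v * P u) / cross u v) (at u)"
    by (rule DERIV_cong[OF DERIV_add[OF DERIV_Y DERIV_mult[OF DERIV_seg_neg_u[OF assms] DERIV_Q]]])
      (use assms in \<open>simp add: Q2_frenet field_simps\<close>)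
  ultimately show ?thesis unfolding Q_rotate by simp
qed

lemma DERIV_Re_tangent_meet_v:
  assumes "cross u v \<noteq> 0"
  shows "((\<lambda>v. Re (tangent_meet u v)) has_real_derivative k v * seg_pos u v * P u / cross u v) (at v)"
proof -
  have "Re (tangent_meet u v) = X u + seg_neg u v * P u" for v
    unfolding tangent_meet_def T_def by (simp add: gamma_eq)
  then show ?thesis
    by (simp only:) (rule DERIV_cong[OF DERIV_add[OF DERIV_const DERIV_mult[OF DERIV_seg_neg_v[OF assms] DERIV_const]]],
      use assms in \<open>simp add: seg_pos_def power2_eq_square field_simps\<close>)
qed

lemma DERIV_Im_tangent_meet_v:
  assumes "cross u v \<noteq> 0"
  shows "((\<lambda>v. Im (tangent_meet u v)) has_real_derivative k v * seg_pos u v * Q u / cross u v) (at v)"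
proof -
  have "Im (tangent_meet u v) = Y u + seg_neg u v * Q u" for v
    unfolding tangent_meet_def T_def by (simp add: gamma_eq)
  then show ?thesis
    by (simp only:) (rule DERIV_cong[OF DERIV_add[OF DERIV_const DERIV_mult[OF DERIV_seg_neg_v[OF assms] DERIV_const]]],
      use assms in \<open>simp add: seg_pos_def power2_eq_square field_simps\<close>)
qed

lemma open_exterior: "open (- oval_domain \<gamma>)"
proof -
  have "range \<gamma> = \<gamma> ` {0..L}"
  proof
    show "range \<gamma> \<subseteq> \<gamma> ` {0..L}"
    proof
      fix y assume "y \<in> range \<gamma>"
      then obtain t where t: "y = \<gamma> t" by blast
      obtain n :: int where n: "t - of_int n * L \<in> {0..<L}"
        using exists_shift_into_period[OF L_pos] by blast
      have "\<gamma> (t - of_int n * L) = y"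
        using periodic_int[of "t - of_int n * L" n] t by simp
      with n show "y \<in> \<gamma> ` {0..L}" by force
    qed
  qed auto
  moreover have "compact (\<gamma> ` {0..L})"
    using isCont_gamma by (intro compact_continuous_image) (auto simp: continuous_at_imp_continuous_on)
  ultimately have "closed (range \<gamma>)"
    by (simp add: compact_imp_closed)
  then show ?thesis
    unfolding oval_domain_def union_with_inside using open_outside by simp
qed

definition "exterior_meet u v \<longleftrightarrow>
  cross u v \<noteq> 0 \<and> 0 < seg_neg u v \<and> 0 < seg_pos u v \<and> tangent_meet u v \<notin> oval_domain \<gamma>"

lemma exterior_meet_coord_point:
  assumes "exterior_meet u v"
  shows "coord_point \<gamma> u v = tangent_meet u v"
  unfolding coord_point_def
proof (rule the_equality)
  show "tangent_meet u v \<notin> oval_domain \<gamma> \<and> neg_tangency \<gamma> (tangent_meet u v) u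
      \<and> pos_tangency \<gamma> (tangent_meet u v) v"
    using assms tangent_meet_neg[of u v] tangent_meet_pos[of u v]
    unfolding exterior_meet_def neg_tangency_def pos_tangency_def tangent_eq_T by blast
  fix B assume "B \<notin> oval_domain \<gamma> \<and> neg_tangency \<gamma> B u \<and> pos_tangency \<gamma> B v"
  then obtain a b where "B - \<gamma> u = of_real a * T u" "\<gamma> v - B = of_real b * T v"
    unfolding neg_tangency_def pos_tangency_def tangent_eq_T by blast
  then show "B = tangent_meet u v"
    using tangent_lines_meet_unique[of u v B a b] tangent_meet_neg[of u v] assms
    unfolding exterior_meet_def by (metis diff_add_cancel)
qed

lemma exterior_meet_Hfun:
  assumes "exterior_meet u v"
  shows "Hfun \<gamma> u v = seg_neg u v + seg_pos u v"
proof -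
  have "dist (\<gamma> u) (tangent_meet u v) = norm (tangent_meet u v - \<gamma> u)"
    "dist (tangent_meet u v) (\<gamma> v) = norm (\<gamma> v - tangent_meet u v)"
    by (simp_all add: dist_norm norm_minus_commute)
  then have "dist (\<gamma> u) (tangent_meet u v) = seg_neg u v" "dist (tangent_meet u v) (\<gamma> v) = seg_pos u v"
    using assms tangent_meet_neg[of u v] tangent_meet_pos[of u v] norm_T[of u] norm_T[of v]
    unfolding exterior_meet_def by (simp_all add: norm_mult)
  then show ?thesis
    unfolding Hfun_def exterior_meet_coord_point[OF assms] by simp
qed

lemma isCont_fst_snd:
  assumes "\<And>t. isCont f t"
  shows "isCont (\<lambda>z. f (fst z)) z" "isCont (\<lambda>z. f (snd z)) z"
  by (auto intro!: isCont_o2[OF _ assms] continuous_intros)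

lemma eventually_exterior_meet:
  assumes "exterior_meet x x'"
  shows "eventually (\<lambda>z. exterior_meet (fst z) (snd z)) (nhds (x, x'))"
proof -
  note cont = isCont_fst_snd[OF DERIV_isCont[OF DERIV_X]] isCont_fst_snd[OF DERIV_isCont[OF DERIV_Y]]
    isCont_fst_snd[OF DERIV_isCont[OF DERIV_P]] isCont_fst_snd[OF DERIV_isCont[OF DERIV_Q]]
  have meet: "cross x x' \<noteq> 0" "0 < seg_neg x x'" "0 < seg_pos x x'" "tangent_meet x x' \<in> - oval_domain \<gamma>"
    using assms unfolding exterior_meet_def by simp_all
  have cross: "isCont (\<lambda>z. cross (fst z) (snd z)) (x, x')"
    unfolding cross_def by (intro continuous_intros cont)
  have seg_neg: "isCont (\<lambda>z. seg_neg (fst z) (snd z)) (x, x')"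
    unfolding seg_neg_def[abs_def] chord_x_Tv_def
    by (intro continuous_intros cont cross) (use meet in simp)
  have seg_pos: "isCont (\<lambda>z. seg_pos (fst z) (snd z)) (x, x')"
    unfolding seg_pos_def[abs_def] Tu_x_chord_def
    by (intro continuous_intros cont cross) (use meet in simp)
  have meet_cont: "isCont (\<lambda>z. tangent_meet (fst z) (snd z)) (x, x')"
    unfolding tangent_meet_def
    by (intro continuous_intros seg_neg isCont_fst_snd[OF isCont_gamma] isCont_fst_snd[OF isCont_T])
  have "eventually (\<lambda>z. cross (fst z) (snd z) \<in> - {0}) (nhds (x, x'))"
    by (rule eventually_nhds_isCont_open[OF cross]) (use meet in auto)
  moreover have "eventually (\<lambda>z. seg_neg (fst z) (snd z) \<in> {0<..}) (nhds (x, x'))"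
    by (rule eventually_nhds_isCont_open[OF seg_neg]) (use meet in auto)
  moreover have "eventually (\<lambda>z. seg_pos (fst z) (snd z) \<in> {0<..}) (nhds (x, x'))"
    by (rule eventually_nhds_isCont_open[OF seg_pos]) (use meet in auto)
  moreover have "eventually (\<lambda>z. tangent_meet (fst z) (snd z) \<in> - oval_domain \<gamma>) (nhds (x, x'))"
    by (rule eventually_nhds_isCont_open[OF meet_cont open_exterior]) (use meet in simp)
  ultimately show ?thesis
    unfolding exterior_meet_def by eventually_elim auto
qed

lemma tangency_exterior_meet:
  assumes A: "A \<notin> oval_domain \<gamma>" and "neg_tangency \<gamma> A x" and "pos_tangency \<gamma> A x'"
  shows "exterior_meet x x'" "tangent_meet x x' = A"
    "seg_neg x x' = dist A (\<gamma> x)" "seg_pos x x' = dist A (\<gamma> x')"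
proof -
  obtain a where a: "a > 0" "A - \<gamma> x = of_real a * T x"
    using assms(2) unfolding neg_tangency_def tangent_eq_T by blast
  obtain b where b: "b > 0" "\<gamma> x' - A = of_real b * T x'"
    using assms(3) unfolding pos_tangency_def tangent_eq_T by blast
  have "\<gamma> x' \<noteq> \<gamma> x \<or> T x' \<noteq> T x"
  proof (rule ccontr)
    assume "\<not> ?thesis"
    then have "of_real a * T x + of_real b * T x = 0"
      using a(2) b(2) by (metis add.commute diff_add_cancel eq_neg_iff_add_eq_0 minus_diff_eq)
    then have "of_real (a + b) * T x = 0"
      by (simp add: distrib_right)
    then have "a + b = 0 \<or> T x = 0"
      by (simp only: mult_eq_0_iff of_real_eq_0_iff)
    then show False
      using a(1) b(1) T_nonzero[of x] by linarith
  qed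
  then have "\<not> (\<exists>n::int. x' = x + of_int n * L)"
    using periodic_int periodic_shift_int[where f = T, OF periodic_T] by auto
  then have "Im (cnj (T x) * (\<gamma> x' - \<gamma> x)) > 0"
    by (rule curve_left_of_tangent)
  moreover have "\<gamma> x' - \<gamma> x = of_real a * T x + of_real b * T x'"
    using a(2) b(2) by (simp add: algebra_simps)
  ultimately have "0 < b * cross x x'"
    unfolding T_def cross_def by (simp add: algebra_simps)
  then have cross: "cross x x' \<noteq> 0"
    by auto
  have seg: "seg_neg x x' = a" "seg_pos x x' = b"
    using tangent_lines_meet_unique[OF cross a(2) b(2)] by simp_all
  have "dist A (\<gamma> x) = norm (A - \<gamma> x)" "dist A (\<gamma> x') = norm (\<gamma> x' - A)"
    by (simp_all add: dist_norm norm_minus_commute)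
  then show "seg_neg x x' = dist A (\<gamma> x)" "seg_pos x x' = dist A (\<gamma> x')"
    using a b seg norm_T[of x] norm_T[of x'] by (simp_all add: norm_mult)
  show "tangent_meet x x' = A"
    using a(2) seg unfolding tangent_meet_def by (simp add: algebra_simps)
  then show "exterior_meet x x'"
    using seg a(1) b(1) cross A unfolding exterior_meet_def by simp
qed

section \<open>The mixed second derivative of H\<close>

lemma eventually_exterior_meet_prod:
  assumes "exterior_meet x x'"
  obtains U V where "eventually U (nhds x)" "eventually V (nhds x')"
    "\<And>u v. U u \<Longrightarrow> V v \<Longrightarrow> exterior_meet u v"
  using eventually_exterior_meet[OF assms] unfolding nhds_prod eventually_prod_filter by auto

lemma mixed_partial_Hfun:
  assumes "exterior_meet x x'"
  shows "deriv (\<lambda>u. deriv (\<lambda>v. Hfun \<gamma> u v) x') x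
    = - k x * k x' * (seg_neg x x' + seg_pos x x') / (1 + dot x x')"
proof -
  obtain U V where U: "eventually U (nhds x)" and V: "eventually V (nhds x')"
    and meet: "\<And>u v. U u \<Longrightarrow> V v \<Longrightarrow> exterior_meet u v"
    using eventually_exterior_meet_prod[OF assms] by blast
  have inner: "deriv (\<lambda>v. Hfun \<gamma> u v) x' = dH_dv u x'" if "U u" for u
  proof -
    have near: "eventually (\<lambda>v. Hfun \<gamma> u v = seg_neg u v + seg_pos u v) (nhds x')"
      using V by eventually_elim (use meet[OF that] exterior_meet_Hfun in blast)
    have "cross u x' \<noteq> 0"
      using meet[OF that eventually_nhds_x_imp_x[OF V]] unfolding exterior_meet_def by simp
    then show ?thesis
      by (intro DERIV_imp_deriv DERIV_cong_ev[OF refl near refl, THEN iffD2] DERIV_Hfun_v)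
  qed
  have near: "eventually (\<lambda>u. deriv (\<lambda>v. Hfun \<gamma> u v) x' = dH_dv u x') (nhds x)"
    using U by eventually_elim (rule inner)
  have "cross x x' \<noteq> 0"
    using assms unfolding exterior_meet_def by simp
  then show ?thesis
    by (intro DERIV_imp_deriv DERIV_cong_ev[OF refl near refl, THEN iffD2] DERIV_dH_dv_u)
qed

lemma coord_jacobian_exterior_meet:
  assumes "exterior_meet x x'"
  shows "coord_jacobian \<gamma> x x' = - k x * k x' * seg_neg x x' * seg_pos x x' / cross x x'"
proof -
  obtain U V where U: "eventually U (nhds x)" and V: "eventually V (nhds x')"
    and meet: "\<And>u v. U u \<Longrightarrow> V v \<Longrightarrow> exterior_meet u v"
    using eventually_exterior_meet_prod[OF assms] by blast
  have s: "cross x x' \<noteq> 0"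
    using assms unfolding exterior_meet_def by simp
  have "eventually (\<lambda>u. coord_point \<gamma> u x' = tangent_meet u x') (nhds x)"
    using U by eventually_elim (use meet eventually_nhds_x_imp_x[OF V] exterior_meet_coord_point in blast)
  then have near_Re: "eventually (\<lambda>u. Re (coord_point \<gamma> u x') = Re (tangent_meet u x')) (nhds x)"
    and near_Im: "eventually (\<lambda>u. Im (coord_point \<gamma> u x') = Im (tangent_meet u x')) (nhds x)"
    by (auto elim: eventually_mono)
  have du: "deriv (\<lambda>u. Re (coord_point \<gamma> u x')) x = k x * seg_neg x x' * P x' / cross x x'"
    "deriv (\<lambda>u. Im (coord_point \<gamma> u x')) x = k x * seg_neg x x' * Q x' / cross x x'"
    by (intro DERIV_imp_deriv DERIV_cong_ev[OF refl near_Re refl, THEN iffD2] DERIV_Re_tangent_meet_u s,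
        intro DERIV_imp_deriv DERIV_cong_ev[OF refl near_Im refl, THEN iffD2] DERIV_Im_tangent_meet_u s)
  have "eventually (\<lambda>v. coord_point \<gamma> x v = tangent_meet x v) (nhds x')"
    using V by eventually_elim (use meet eventually_nhds_x_imp_x[OF U] exterior_meet_coord_point in blast)
  then have near_Re: "eventually (\<lambda>v. Re (coord_point \<gamma> x v) = Re (tangent_meet x v)) (nhds x')"
    and near_Im: "eventually (\<lambda>v. Im (coord_point \<gamma> x v) = Im (tangent_meet x v)) (nhds x')"
    by (auto elim: eventually_mono)
  have dv: "deriv (\<lambda>v. Re (coord_point \<gamma> x v)) x' = k x' * seg_pos x x' * P x / cross x x'"
    "deriv (\<lambda>v. Im (coord_point \<gamma> x v)) x' = k x' * seg_pos x x' * Q x / cross x x'"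
    by (intro DERIV_imp_deriv DERIV_cong_ev[OF refl near_Re refl, THEN iffD2] DERIV_Re_tangent_meet_v s,
        intro DERIV_imp_deriv DERIV_cong_ev[OF refl near_Im refl, THEN iffD2] DERIV_Im_tangent_meet_v s)
  have "coord_jacobian \<gamma> x x'
      = k x * k x' * seg_neg x x' * seg_pos x x' * (P x' * Q x - P x * Q x') / (cross x x')\<^sup>2"
    unfolding coord_jacobian_def du dv using s by (simp add: power2_eq_square field_simps)
  also have "\<dots> = - k x * k x' * seg_neg x x' * seg_pos x x' / cross x x'"
  proof -
    have "P x' * Q x - P x * Q x' = - cross x x'"
      by (simp add: cross_def)
    then show ?thesis
      unfolding power2_eq_square using s by simp
  qed
  finally show ?thesis .
qed

lemma cot_half_angle_exterior_meet:
  assumes "exterior_meet x x'"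
  shows "cot (vec_angle (\<gamma> x - tangent_meet x x') (\<gamma> x' - tangent_meet x x') / 2)
    = (1 - dot x x') / \<bar>cross x x'\<bar>"
proof -
  define a b C where "a = seg_neg x x'" "b = seg_pos x x'" "C = dot x x'"
  have pos: "a > 0" "b > 0" and s: "cross x x' \<noteq> 0"
    using assms unfolding exterior_meet_def a_b_C_def by simp_all
  have sq: "1 - C\<^sup>2 = (cross x x')\<^sup>2"
    using cross_sq_plus_dot_sq[of x x'] unfolding a_b_C_def by simp
  moreover have "0 < (cross x x')\<^sup>2"
    using s by simp
  ultimately have "C\<^sup>2 < 1"
    by linarith
  then have C: "-1 < C" "C < 1"
    by (auto simp: abs_square_less_1)
  have vectors: "\<gamma> x - tangent_meet x x' = - (of_real a * T x)" "\<gamma> x' - tangent_meet x x' = of_real b * T x'"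
    using tangent_meet_neg[of x x'] tangent_meet_pos[OF s] unfolding a_b_C_def by (simp_all add: algebra_simps)
  have "(\<gamma> x - tangent_meet x x') \<bullet> (\<gamma> x' - tangent_meet x x') = - a * b * C"
    unfolding vectors a_b_C_def dot_def T_def by (simp add: inner_complex_def algebra_simps)
  moreover have "norm (\<gamma> x - tangent_meet x x') = a" "norm (\<gamma> x' - tangent_meet x x') = b"
    unfolding vectors using pos norm_T by (simp_all add: norm_mult)
  ultimately have "vec_angle (\<gamma> x - tangent_meet x x') (\<gamma> x' - tangent_meet x x') = arccos (- C)"
    unfolding vec_angle_def using pos by simp
  then show ?thesis
    using cot_half_arccos[OF C] sq unfolding a_b_C_def by simp
qed

lemma mixed_partial_Hfun_at_tangency:
  assumes "A \<notin> oval_domain \<gamma>" "neg_tangency \<gamma> A x" "pos_tangency \<gamma> A x'"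
  shows "- deriv (\<lambda>u. deriv (\<lambda>v. Hfun \<gamma> u v) x') x =
           cot (vec_angle (\<gamma> x - A) (\<gamma> x' - A) / 2)
           * (1 / dist A (\<gamma> x) + 1 / dist A (\<gamma> x'))
           * \<bar>coord_jacobian \<gamma> x x'\<bar>"
proof -
  note meet = tangency_exterior_meet[OF assms]
  define a b s C where "a = seg_neg x x'" "b = seg_pos x x'" "s = cross x x'" "C = dot x x'"
  have pos: "a > 0" "b > 0" "s \<noteq> 0" "k x > 0" "k x' > 0"
    using meet(1) k_pos unfolding exterior_meet_def a_b_s_C_def by simp_all
  have "(1 - C) * (1 + C) = s\<^sup>2"
    using cross_sq_plus_dot_sq[of x x'] unfolding a_b_s_C_def by (simp add: algebra_simps power2_eq_square)
  also have "\<dots> = \<bar>s\<bar> * \<bar>s\<bar>"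
    by (simp add: power2_eq_square abs_mult_self_eq)
  finally have ss: "\<bar>s\<bar> * \<bar>s\<bar> = (1 - C) * (1 + C)" ..
  then have "1 - C \<noteq> 0"
    using pos(3) by auto
  have "(1 - C) / \<bar>s\<bar> * (1 / a + 1 / b) * (k x * k x' * a * b / \<bar>s\<bar>)
      = (1 - C) * (k x * k x' * (a + b)) / (\<bar>s\<bar> * \<bar>s\<bar>)"
    using pos by (simp add: field_simps)
  also have "\<dots> = k x * k x' * (a + b) / (1 + C)"
    unfolding ss using \<open>1 - C \<noteq> 0\<close> by simp
  finally have identity: "(1 - C) / \<bar>s\<bar> * (1 / a + 1 / b) * (k x * k x' * a * b / \<bar>s\<bar>)
      = k x * k x' * (a + b) / (1 + C)" .
  have "- deriv (\<lambda>u. deriv (\<lambda>v. Hfun \<gamma> u v) x') x = k x * k x' * (a + b) / (1 + C)"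
    using mixed_partial_Hfun[OF meet(1)] unfolding a_b_s_C_def by simp
  moreover have "\<bar>coord_jacobian \<gamma> x x'\<bar> = k x * k x' * a * b / \<bar>s\<bar>"
    using coord_jacobian_exterior_meet[OF meet(1)] pos unfolding a_b_s_C_def
    by (simp add: abs_mult abs_divide)
  moreover have "cot (vec_angle (\<gamma> x - A) (\<gamma> x' - A) / 2) = (1 - C) / \<bar>s\<bar>"
    using cot_half_angle_exterior_meet[OF meet(1)] unfolding meet(2) a_b_s_C_def .
  moreover have "dist A (\<gamma> x) = a" "dist A (\<gamma> x') = b"
    using meet(3,4) unfolding a_b_s_C_def by simp_all
  ultimately show ?thesis
    using identity by simp
qed

end

theorem lemma2p2:
  fixes \<gamma> :: "real \<Rightarrow> complex" and L x x' :: real and A :: complex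
  assumes "arclength_oval \<gamma> L"
    and "A \<notin> oval_domain \<gamma>"
    and "neg_tangency \<gamma> A x"
    and "pos_tangency \<gamma> A x'"
  shows "- deriv (\<lambda>u. deriv (\<lambda>v. Hfun \<gamma> u v) x') x =
           cot (vec_angle (\<gamma> x - A) (\<gamma> x' - A) / 2)
           * (1 / dist A (\<gamma> x) + 1 / dist A (\<gamma> x'))
           * \<bar>coord_jacobian \<gamma> x x'\<bar>"
proof -
  interpret oval \<gamma> L
    by unfold_locales (rule assms(1))
  show ?thesis
    by (rule mixed_partial_Hfun_at_tangency[OF assms(2-4)])
qed

end
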